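(* Let $\mathcal K$ be a 2-category which admits Eilenberg–Moore constructions for both monads and comonads and in which idempotent 2-cells split. Let $(t,\mu,\eta)$ be a monad and $(c,\delta,\varepsilon)$ a comonad on a 0-cell $k$, and $\psi:tc\Rightarrow ct$ a 2-cell. The following are equivalent: (i) $(t,c,\psi)$ is a weak entwining structure, i.e. $\psi\ast\mu c=c\mu\ast\psi t\ast t\psi$, $\delta t\ast\psi=c\psi\ast\psi c\ast t\delta$, $\psi\ast\eta c=c\varepsilon t\ast c\psi\ast c\eta c\ast\delta$ and $\varepsilon t\ast\psi=\mu\ast t\varepsilon t\ast t\psi\ast t\eta c$; (ii) $\psi$ induces both a weak $\iota$-lifting of the comonad $c$ for the monad $t$ and a weak $\pi$-lifting of the monad $t$ for the comonad $c$; that is, both of the following hold: (A) $c\mu\ast\psi t\ast t\psi=\psi\ast\mu c$, $\delta t\ast\psi=cc\mu\ast c\psi t\ast\psi ct\ast t\delta t\ast t\psi\ast t\eta c$ and $\varepsilon t\ast\psi=\mu\ast t\varepsilon t\ast t\psi\ast t\eta c$ (i.e. $((c,\psi),\delta,\varepsilon)$ is a comonad in $\mathrm{Mnd}^\iota(\mathcal K)$); (B) $\delta t\ast\psi=c\psi\ast\psi c\ast t\delta$, $\psi\ast\mu c=c\varepsilon t\ast c\psi\ast c\mu c\ast\psi tc\ast t\psi c\ast tt\delta$ and $\psi\ast\eta c=c\varepsilon t\ast c\psi\ast c\eta c\ast\delta$ (i.e. $((t,\psi),\mu,\eta)$ is a monad in the vertical opposite of $\mathrm{Mnd}^\iota$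 of the vertically-opposite 2-category $\mathcal K_*$).
   Context: Conventions in a 2-category $\mathcal K$: horizontal composition and whiskering by juxtaposition in the order of functor composition; identity 1-cell of $k$ written $k$, identity 2-cell of $V$ written $V$; vertical composition $\ast$ with $\alpha\ast\beta$ meaning $\beta$ then $\alpha$. Monad $(t,\mu,\eta)$: $\mu:tt\Rightarrow t$, $\eta:k\Rightarrow t$ associative and unital. Comonad $(c,\delta,\varepsilon)$: $\delta:c\Rightarrow cc$, $\varepsilon:c\Rightarrow k$, coassociative and counital. $\mathcal K$ admitting Eilenberg–Moore constructions for monads (resp. comonads) means the inclusion of $\mathcal K$ into the Lack–Street 2-category of monads (resp. of comonads) has a right 2-adjoint; idempotent 2-cells split means every idempotent 2-cell factors as $\iota\ast\pi$ with $\pi\ast\iota$ an identity. $\mathrm{Mnd}^\iota(\mathcal K)$: 0-cells monads; 1-cells $(V,\psi):t\to t'$ with $\psi:t'V\Rightarrow Vt$, $V\mu\ast\psi t\ast t'\psi=\psi\ast\mu'V$; 2-cells $\omega:(V,\psi)\Rightarrow(W,\phi)$ are $\omega:V\Rightarrow W$ with $\omega t\ast\psi=W\mu\ast\phi t\ast t'\omega t\ast t'\psi\ast t'\eta'V$; compositions as in $\mathcal K$, 1-cell composite $(V'V,V'\psi\ast\psi'V)$. *)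

theory Defs
  imports Main
begin

text \<open>Data of a (strict) 2-category: 0-cells of type 'o, 1-cells of type 'a, 2-cells of type 'b.
  comp1 g f is the composite "g f" (g after f), comp2 is horizontal composition of 2-cells
  (same order), vcomp a b is the vertical composite "a * b" (first b, then a).\<close>

record ('o, 'a, 'b) two_cat_data =
  Ob    :: "'o set"
  Arr   :: "'a set"
  src1  :: "'a \<Rightarrow> 'o"
  trg1  :: "'a \<Rightarrow> 'o"
  Cell  :: "'b set"
  cdom  :: "'b \<Rightarrow> 'a"
  ccod  :: "'b \<Rightarrow> 'a"
  id1   :: "'o \<Rightarrow> 'a"
  id2   :: "'a \<Rightarrow> 'b"
  vcomp :: "'b \<Rightarrow> 'b \<Rightarrow> 'b"
  comp1 :: "'a \<Rightarrow> 'a \<Rightarrow> 'a"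
  comp2 :: "'b \<Rightarrow> 'b \<Rightarrow> 'b"

definition two_category :: "('o, 'a, 'b) two_cat_data \<Rightarrow> bool" where
  "two_category K \<longleftrightarrow>
    (\<forall>f\<in>Arr K. src1 K f \<in> Ob K \<and> trg1 K f \<in> Ob K) \<and>
    (\<forall>x\<in>Ob K. id1 K x \<in> Arr K \<and> src1 K (id1 K x) = x \<and> trg1 K (id1 K x) = x) \<and>
    (\<forall>f\<in>Arr K. \<forall>g\<in>Arr K. src1 K g = trg1 K f \<longrightarrow>
        comp1 K g f \<in> Arr K \<and> src1 K (comp1 K g f) = src1 K f \<and> trg1 K (comp1 K g f) = trg1 K g) \<and>
    (\<forall>f\<in>Arr K. comp1 K (id1 K (trg1 K f)) f = f \<and> comp1 K f (id1 K (src1 K f)) = f) \<and>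
    (\<forall>f\<in>Arr K. \<forall>g\<in>Arr K. \<forall>h\<in>Arr K. src1 K g = trg1 K f \<longrightarrow> src1 K h = trg1 K g \<longrightarrow>
        comp1 K h (comp1 K g f) = comp1 K (comp1 K h g) f) \<and>
    (\<forall>a\<in>Cell K. cdom K a \<in> Arr K \<and> ccod K a \<in> Arr K \<and>
        src1 K (cdom K a) = src1 K (ccod K a) \<and> trg1 K (cdom K a) = trg1 K (ccod K a)) \<and>
    (\<forall>f\<in>Arr K. id2 K f \<in> Cell K \<and> cdom K (id2 K f) = f \<and> ccod K (id2 K f) = f) \<and>
    (\<forall>a\<in>Cell K. \<forall>b\<in>Cell K. cdom K a = ccod K b \<longrightarrow>
        vcomp K a b \<in> Cell K \<and> cdom K (vcomp K a b) = cdom K b \<and> ccod K (vcomp K a b) = ccod K a) \<and>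
    (\<forall>a\<in>Cell K. vcomp K (id2 K (ccod K a)) a = a \<and> vcomp K a (id2 K (cdom K a)) = a) \<and>
    (\<forall>a\<in>Cell K. \<forall>b\<in>Cell K. \<forall>c\<in>Cell K. cdom K a = ccod K b \<longrightarrow> cdom K b = ccod K c \<longrightarrow>
        vcomp K a (vcomp K b c) = vcomp K (vcomp K a b) c) \<and>
    (\<forall>a\<in>Cell K. \<forall>b\<in>Cell K. src1 K (cdom K a) = trg1 K (cdom K b) \<longrightarrow>
        comp2 K a b \<in> Cell K \<and> cdom K (comp2 K a b) = comp1 K (cdom K a) (cdom K b) \<and>
        ccod K (comp2 K a b) = comp1 K (ccod K a) (ccod K b)) \<and>
    (\<forall>a\<in>Cell K. comp2 K (id2 K (id1 K (trg1 K (cdom K a)))) a = a \<and>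
        comp2 K a (id2 K (id1 K (src1 K (cdom K a)))) = a) \<and>
    (\<forall>a\<in>Cell K. \<forall>b\<in>Cell K. \<forall>c\<in>Cell K. src1 K (cdom K a) = trg1 K (cdom K b) \<longrightarrow>
        src1 K (cdom K b) = trg1 K (cdom K c) \<longrightarrow>
        comp2 K a (comp2 K b c) = comp2 K (comp2 K a b) c) \<and>
    (\<forall>f\<in>Arr K. \<forall>g\<in>Arr K. src1 K g = trg1 K f \<longrightarrow>
        comp2 K (id2 K g) (id2 K f) = id2 K (comp1 K g f)) \<and>
    (\<forall>a\<in>Cell K. \<forall>b\<in>Cell K. \<forall>c\<in>Cell K. \<forall>d\<in>Cell K.
        cdom K a = ccod K b \<longrightarrow> cdom K c = ccod K d \<longrightarrow> src1 K (cdom K a) = trg1 K (cdom K c) \<longrightarrow>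
        comp2 K (vcomp K a b) (vcomp K c d) = vcomp K (comp2 K a c) (comp2 K b d))"

text \<open>Whiskering: \<open>wl K V a\<close> is "V a", \<open>wr K a V\<close> is "a V".\<close>

definition wl :: "('o, 'a, 'b) two_cat_data \<Rightarrow> 'a \<Rightarrow> 'b \<Rightarrow> 'b" where
  "wl K V a = comp2 K (id2 K V) a"

definition wr :: "('o, 'a, 'b) two_cat_data \<Rightarrow> 'b \<Rightarrow> 'a \<Rightarrow> 'b" where
  "wr K a V = comp2 K a (id2 K V)"

definition monad :: "('o, 'a, 'b) two_cat_data \<Rightarrow> 'o \<Rightarrow> 'a \<Rightarrow> 'b \<Rightarrow> 'b \<Rightarrow> bool" where
  "monad K k t \<mu> \<eta> \<longleftrightarrow>
    k \<in> Ob K \<and> t \<in> Arr K \<and> src1 K t = k \<and> trg1 K t = k \<and>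
    \<mu> \<in> Cell K \<and> cdom K \<mu> = comp1 K t t \<and> ccod K \<mu> = t \<and>
    \<eta> \<in> Cell K \<and> cdom K \<eta> = id1 K k \<and> ccod K \<eta> = t \<and>
    vcomp K \<mu> (wr K \<mu> t) = vcomp K \<mu> (wl K t \<mu>) \<and>
    vcomp K \<mu> (wr K \<eta> t) = id2 K t \<and>
    vcomp K \<mu> (wl K t \<eta>) = id2 K t"

definition comonad :: "('o, 'a, 'b) two_cat_data \<Rightarrow> 'o \<Rightarrow> 'a \<Rightarrow> 'b \<Rightarrow> 'b \<Rightarrow> bool" where
  "comonad K k c \<delta> \<epsilon> \<longleftrightarrow>
    k \<in> Ob K \<and> c \<in> Arr K \<and> src1 K c = k \<and> trg1 K c = k \<and>
    \<delta> \<in> Cell K \<and> cdom K \<delta> = c \<and> ccod K \<delta> = comp1 K c c \<and>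
    \<epsilon> \<in> Cell K \<and> cdom K \<epsilon> = c \<and> ccod K \<epsilon> = id1 K k \<and>
    vcomp K (wr K \<delta> c) \<delta> = vcomp K (wl K c \<delta>) \<delta> \<and>
    vcomp K (wr K \<epsilon> c) \<delta> = id2 K c \<and>
    vcomp K (wl K c \<epsilon>) \<delta> = id2 K c"

text \<open>The inclusion 2-functor K -> Mnd(K) (Street / Lack--Street 2-category of monads: 1-cells
  (V,psi) with psi : t'V => Vt compatible with multiplications and units, 2-cells
  w : V => W with (w t) * psi = phi * (t' w)) has a right 2-adjoint iff for every monad t
  the 2-functor Mnd(incl(-), t) is representable: there is a 0-cell E and a 1-cell
  (u,chi) : incl(E) -> t of Mnd(K) such that composition with it induces an isomorphism of
  hom-categories K(x,E) = Mnd(K)(incl x, t) for each 0-cell x.  A 1-cell incl(x) -> t is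
  a pair (V,psi) with V : x -> k, psi : t V => V, psi * t psi = psi * mu V, psi * eta V = V;
  the composite of (u,chi) with incl(f) = (f, f) is (u f, chi f).\<close>

definition admits_EM_monads :: "('o, 'a, 'b) two_cat_data \<Rightarrow> bool" where
  "admits_EM_monads K \<longleftrightarrow>
    (\<forall>k t \<mu> \<eta>. monad K k t \<mu> \<eta> \<longrightarrow>
      (\<exists>E u \<chi>. E \<in> Ob K \<and> u \<in> Arr K \<and> src1 K u = E \<and> trg1 K u = k \<and>
         \<chi> \<in> Cell K \<and> cdom K \<chi> = comp1 K t u \<and> ccod K \<chi> = u \<and>
         vcomp K \<chi> (wl K t \<chi>) = vcomp K \<chi> (wr K \<mu> u) \<and>
         vcomp K \<chi> (wr K \<eta> u) = id2 K u \<and>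
         (\<forall>x\<in>Ob K.
            (\<forall>V \<psi>. V \<in> Arr K \<and> src1 K V = x \<and> trg1 K V = k \<and>
                \<psi> \<in> Cell K \<and> cdom K \<psi> = comp1 K t V \<and> ccod K \<psi> = V \<and>
                vcomp K \<psi> (wl K t \<psi>) = vcomp K \<psi> (wr K \<mu> V) \<and>
                vcomp K \<psi> (wr K \<eta> V) = id2 K V \<longrightarrow>
              (\<exists>!f. f \<in> Arr K \<and> src1 K f = x \<and> trg1 K f = E \<and>
                    comp1 K u f = V \<and> wr K \<chi> f = \<psi>)) \<and>
            (\<forall>f g \<omega>. f \<in> Arr K \<and> src1 K f = x \<and> trg1 K f = E \<and>
                g \<in> Arr K \<and> src1 K g = x \<and> trg1 K g = E \<and>
                \<omega> \<in> Cell K \<and> cdom K \<omega> = comp1 K u f \<and> ccod K \<omega> = comp1 K u g \<and>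
                vcomp K \<omega> (wr K \<chi> f) = vcomp K (wr K \<chi> g) (wl K t \<omega>) \<longrightarrow>
              (\<exists>!\<alpha>. \<alpha> \<in> Cell K \<and> cdom K \<alpha> = f \<and> ccod K \<alpha> = g \<and> wl K u \<alpha> = \<omega>)))))"

text \<open>Dually for comonads, with Comnd(K) = Mnd(K_*)_* (K_* reverses 2-cells): 1-cells
  (V,psi) : c -> c' with psi : V c => c' V; 1-cells incl(x) -> c are coactions
  psi : V => c V with c psi * psi = delta V * psi and eps V * psi = V; 2-cells
  w : V => W with phi * w = c w * psi.\<close>

definition admits_EM_comonads :: "('o, 'a, 'b) two_cat_data \<Rightarrow> bool" where
  "admits_EM_comonads K \<longleftrightarrow>
    (\<forall>k c \<delta> \<epsilon>. comonad K k c \<delta> \<epsilon> \<longrightarrow>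
      (\<exists>E u \<chi>. E \<in> Ob K \<and> u \<in> Arr K \<and> src1 K u = E \<and> trg1 K u = k \<and>
         \<chi> \<in> Cell K \<and> cdom K \<chi> = u \<and> ccod K \<chi> = comp1 K c u \<and>
         vcomp K (wl K c \<chi>) \<chi> = vcomp K (wr K \<delta> u) \<chi> \<and>
         vcomp K (wr K \<epsilon> u) \<chi> = id2 K u \<and>
         (\<forall>x\<in>Ob K.
            (\<forall>V \<psi>. V \<in> Arr K \<and> src1 K V = x \<and> trg1 K V = k \<and>
                \<psi> \<in> Cell K \<and> cdom K \<psi> = V \<and> ccod K \<psi> = comp1 K c V \<and>
                vcomp K (wl K c \<psi>) \<psi> = vcomp K (wr K \<delta> V) \<psi> \<and>
                vcomp K (wr K \<epsilon> V) \<psi> = id2 K V \<longrightarrow>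
              (\<exists>!f. f \<in> Arr K \<and> src1 K f = x \<and> trg1 K f = E \<and>
                    comp1 K u f = V \<and> wr K \<chi> f = \<psi>)) \<and>
            (\<forall>f g \<omega>. f \<in> Arr K \<and> src1 K f = x \<and> trg1 K f = E \<and>
                g \<in> Arr K \<and> src1 K g = x \<and> trg1 K g = E \<and>
                \<omega> \<in> Cell K \<and> cdom K \<omega> = comp1 K u f \<and> ccod K \<omega> = comp1 K u g \<and>
                vcomp K (wr K \<chi> g) \<omega> = vcomp K (wl K c \<omega>) (wr K \<chi> f) \<longrightarrow>
              (\<exists>!\<alpha>. \<alpha> \<in> Cell K \<and> cdom K \<alpha> = f \<and> ccod K \<alpha> = g \<and> wl K u \<alpha> = \<omega>)))))"

definition idempotent_2cells_split :: "('o, 'a, 'b) two_cat_data \<Rightarrow> bool" where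
  "idempotent_2cells_split K \<longleftrightarrow>
    (\<forall>e\<in>Cell K. cdom K e = ccod K e \<and> vcomp K e e = e \<longrightarrow>
      (\<exists>W \<pi> \<iota>. W \<in> Arr K \<and> src1 K W = src1 K (cdom K e) \<and> trg1 K W = trg1 K (cdom K e) \<and>
         \<pi> \<in> Cell K \<and> cdom K \<pi> = cdom K e \<and> ccod K \<pi> = W \<and>
         \<iota> \<in> Cell K \<and> cdom K \<iota> = W \<and> ccod K \<iota> = cdom K e \<and>
         vcomp K \<iota> \<pi> = e \<and> vcomp K \<pi> \<iota> = id2 K W))"

definition weak_entwining ::
  "('o, 'a, 'b) two_cat_data \<Rightarrow> 'a \<Rightarrow> 'b \<Rightarrow> 'b \<Rightarrow> 'a \<Rightarrow> 'b \<Rightarrow> 'b \<Rightarrow> 'b \<Rightarrow> bool" where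
  "weak_entwining K t \<mu> \<eta> c \<delta> \<epsilon> \<psi> \<longleftrightarrow>
    vcomp K \<psi> (wr K \<mu> c) = vcomp K (wl K c \<mu>) (vcomp K (wr K \<psi> t) (wl K t \<psi>)) \<and>
    vcomp K (wr K \<delta> t) \<psi> = vcomp K (wl K c \<psi>) (vcomp K (wr K \<psi> c) (wl K t \<delta>)) \<and>
    vcomp K \<psi> (wr K \<eta> c) =
      vcomp K (wl K c (wr K \<epsilon> t)) (vcomp K (wl K c \<psi>) (vcomp K (wl K c (wr K \<eta> c)) \<delta>)) \<and>
    vcomp K (wr K \<epsilon> t) \<psi> =
      vcomp K \<mu> (vcomp K (wl K t (wr K \<epsilon> t)) (vcomp K (wl K t \<psi>) (wl K t (wr K \<eta> c))))"

definition weak_iota_lifting_comonad ::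
  "('o, 'a, 'b) two_cat_data \<Rightarrow> 'a \<Rightarrow> 'b \<Rightarrow> 'b \<Rightarrow> 'a \<Rightarrow> 'b \<Rightarrow> 'b \<Rightarrow> 'b \<Rightarrow> bool" where
  "weak_iota_lifting_comonad K t \<mu> \<eta> c \<delta> \<epsilon> \<psi> \<longleftrightarrow>
    vcomp K (wl K c \<mu>) (vcomp K (wr K \<psi> t) (wl K t \<psi>)) = vcomp K \<psi> (wr K \<mu> c) \<and>
    vcomp K (wr K \<delta> t) \<psi> =
      vcomp K (wl K (comp1 K c c) \<mu>) (vcomp K (wl K c (wr K \<psi> t)) (vcomp K (wr K \<psi> (comp1 K c t))
        (vcomp K (wl K t (wr K \<delta> t)) (vcomp K (wl K t \<psi>) (wl K t (wr K \<eta> c)))))) \<and>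
    vcomp K (wr K \<epsilon> t) \<psi> =
      vcomp K \<mu> (vcomp K (wl K t (wr K \<epsilon> t)) (vcomp K (wl K t \<psi>) (wl K t (wr K \<eta> c))))"

definition weak_pi_lifting_monad ::
  "('o, 'a, 'b) two_cat_data \<Rightarrow> 'a \<Rightarrow> 'b \<Rightarrow> 'b \<Rightarrow> 'a \<Rightarrow> 'b \<Rightarrow> 'b \<Rightarrow> 'b \<Rightarrow> bool" where
  "weak_pi_lifting_monad K t \<mu> \<eta> c \<delta> \<epsilon> \<psi> \<longleftrightarrow>
    vcomp K (wr K \<delta> t) \<psi> = vcomp K (wl K c \<psi>) (vcomp K (wr K \<psi> c) (wl K t \<delta>)) \<and>
    vcomp K \<psi> (wr K \<mu> c) =
      vcomp K (wl K c (wr K \<epsilon> t)) (vcomp K (wl K c \<psi>) (vcomp K (wl K c (wr K \<mu> c))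
        (vcomp K (wr K \<psi> (comp1 K t c)) (vcomp K (wl K t (wr K \<psi> c)) (wl K (comp1 K t t) \<delta>))))) \<and>
    vcomp K \<psi> (wr K \<eta> c) =
      vcomp K (wl K c (wr K \<epsilon> t)) (vcomp K (wl K c \<psi>) (vcomp K (wl K c (wr K \<eta> c)) \<delta>))"

end

theory Submission
  imports Defs
begin

text \<open>Here (A) and (B) are given by their defining equations. Four of the six equations of (A) and (B) are
  equations of a weak entwining structure. The other two follow from multiplicativity
  \<open>\<psi> \<ast> \<mu>c = c\<mu> \<ast> \<psi>t \<ast> t\<psi>\<close> and comultiplicativity \<open>\<delta>t \<ast> \<psi> = c\<psi> \<ast> \<psi>c \<ast> t\<delta>\<close>:
  for (A), precompose \<open>\<delta>t \<ast> \<psi>\<close> with the unit identity \<open>\<mu>c \<ast> t\<eta>c = tc\<close>; interchange moves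
  \<open>\<mu>\<close> past \<open>\<delta>\<close> and multiplicativity absorbs it into \<open>\<psi>\<close>. For (B), dually, postcompose
  \<open>\<psi> \<ast> \<mu>c\<close> with the counit identity \<open>c\<epsilon>t \<ast> \<delta>t = ct\<close>.\<close>

locale endo_two_category =
  fixes K :: "('o, 'a, 'b) two_cat_data" and k :: 'o
  assumes two_category: "two_category K" and obj: "k \<in> Ob K"
begin

definition endo_arr :: "'a \<Rightarrow> bool" where
  "endo_arr f \<longleftrightarrow> f \<in> Arr K \<and> src1 K f = k \<and> trg1 K f = k"

definition endo_cell :: "'b \<Rightarrow> bool" where
  "endo_cell a \<longleftrightarrow> a \<in> Cell K \<and> endo_arr (cdom K a) \<and> endo_arr (ccod K a)"

lemmas two_category_conditions = two_category[unfolded two_category_def]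

lemma endo_arr_id1 [simp]: "endo_arr (id1 K k)"
  using two_category_conditions obj unfolding endo_arr_def by (elim conjE) auto

lemma endo_arr_comp1 [simp]: "endo_arr f \<Longrightarrow> endo_arr g \<Longrightarrow> endo_arr (comp1 K g f)"
  using two_category_conditions unfolding endo_arr_def by auto

lemma comp1_id1_left [simp]: "endo_arr f \<Longrightarrow> comp1 K (id1 K k) f = f"
  and comp1_id1_right [simp]: "endo_arr f \<Longrightarrow> comp1 K f (id1 K k) = f"
  using two_category_conditions unfolding endo_arr_def by auto

lemma comp1_assoc [simp]:
  "endo_arr f \<Longrightarrow> endo_arr g \<Longrightarrow> endo_arr h \<Longrightarrow> comp1 K (comp1 K h g) f = comp1 K h (comp1 K g f)"
  using two_category_conditions unfolding endo_arr_def by simp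

lemma endo_cell_id2 [simp]: "endo_arr f \<Longrightarrow> endo_cell (id2 K f)"
  and cdom_id2 [simp]: "endo_arr f \<Longrightarrow> cdom K (id2 K f) = f"
  and ccod_id2 [simp]: "endo_arr f \<Longrightarrow> ccod K (id2 K f) = f"
  using two_category_conditions unfolding endo_arr_def endo_cell_def by auto

lemma endo_cell_vcomp [simp]: "endo_cell a \<Longrightarrow> endo_cell b \<Longrightarrow> cdom K a = ccod K b \<Longrightarrow> endo_cell (vcomp K a b)"
  and cdom_vcomp [simp]: "endo_cell a \<Longrightarrow> endo_cell b \<Longrightarrow> cdom K a = ccod K b \<Longrightarrow> cdom K (vcomp K a b) = cdom K b"
  and ccod_vcomp [simp]: "endo_cell a \<Longrightarrow> endo_cell b \<Longrightarrow> cdom K a = ccod K b \<Longrightarrow> ccod K (vcomp K a b) = ccod K a"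
  using two_category_conditions unfolding endo_cell_def by auto

lemma endo_cell_comp2 [simp]: "endo_cell a \<Longrightarrow> endo_cell b \<Longrightarrow> endo_cell (comp2 K a b)"
  and cdom_comp2 [simp]: "endo_cell a \<Longrightarrow> endo_cell b \<Longrightarrow> cdom K (comp2 K a b) = comp1 K (cdom K a) (cdom K b)"
  and ccod_comp2 [simp]: "endo_cell a \<Longrightarrow> endo_cell b \<Longrightarrow> ccod K (comp2 K a b) = comp1 K (ccod K a) (ccod K b)"
  using two_category_conditions endo_arr_comp1[of "cdom K b" "cdom K a"] endo_arr_comp1[of "ccod K b" "ccod K a"]
  unfolding endo_cell_def by (auto simp: endo_arr_def)

lemma vcomp_assoc:
  "endo_cell a \<Longrightarrow> endo_cell b \<Longrightarrow> endo_cell c \<Longrightarrow> cdom K a = ccod K b \<Longrightarrow> cdom K b = ccod K c \<Longrightarrow>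
    vcomp K a (vcomp K b c) = vcomp K (vcomp K a b) c"
  using two_category_conditions unfolding endo_cell_def by simp

lemma vcomp_id2_left [simp]: "endo_cell a \<Longrightarrow> vcomp K (id2 K (ccod K a)) a = a"
  and vcomp_id2_right [simp]: "endo_cell a \<Longrightarrow> vcomp K a (id2 K (cdom K a)) = a"
  using two_category_conditions unfolding endo_cell_def by auto

lemma interchange:
  "endo_cell a \<Longrightarrow> endo_cell b \<Longrightarrow> endo_cell c \<Longrightarrow> endo_cell d \<Longrightarrow>
    cdom K a = ccod K b \<Longrightarrow> cdom K c = ccod K d \<Longrightarrow>
    comp2 K (vcomp K a b) (vcomp K c d) = vcomp K (comp2 K a c) (comp2 K b d)"
  using two_category_conditions unfolding endo_cell_def endo_arr_def by simp

lemma comp2_id2: "endo_arr f \<Longrightarrow> endo_arr g \<Longrightarrow> comp2 K (id2 K g) (id2 K f) = id2 K (comp1 K g f)"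
  using two_category_conditions unfolding endo_arr_def by simp

lemma comp2_assoc:
  "endo_cell a \<Longrightarrow> endo_cell b \<Longrightarrow> endo_cell c \<Longrightarrow> comp2 K a (comp2 K b c) = comp2 K (comp2 K a b) c"
  using two_category_conditions unfolding endo_cell_def endo_arr_def by simp

lemma endo_cell_wl [simp]: "endo_arr V \<Longrightarrow> endo_cell a \<Longrightarrow> endo_cell (wl K V a)"
  and cdom_wl [simp]: "endo_arr V \<Longrightarrow> endo_cell a \<Longrightarrow> cdom K (wl K V a) = comp1 K V (cdom K a)"
  and ccod_wl [simp]: "endo_arr V \<Longrightarrow> endo_cell a \<Longrightarrow> ccod K (wl K V a) = comp1 K V (ccod K a)"
  unfolding wl_def by simp_all

lemma endo_cell_wr [simp]: "endo_arr V \<Longrightarrow> endo_cell a \<Longrightarrow> endo_cell (wr K a V)"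
  and cdom_wr [simp]: "endo_arr V \<Longrightarrow> endo_cell a \<Longrightarrow> cdom K (wr K a V) = comp1 K (cdom K a) V"
  and ccod_wr [simp]: "endo_arr V \<Longrightarrow> endo_cell a \<Longrightarrow> ccod K (wr K a V) = comp1 K (ccod K a) V"
  unfolding wr_def by simp_all

lemma id2_vcomp_id2: "endo_arr V \<Longrightarrow> id2 K V = vcomp K (id2 K V) (id2 K V)"
  using vcomp_id2_left[of "id2 K V"] by simp

lemma wr_vcomp:
  "endo_arr V \<Longrightarrow> endo_cell a \<Longrightarrow> endo_cell b \<Longrightarrow> cdom K a = ccod K b \<Longrightarrow>
    wr K (vcomp K a b) V = vcomp K (wr K a V) (wr K b V)"
  unfolding wr_def by (subst id2_vcomp_id2, assumption, subst interchange) auto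

lemma wl_vcomp:
  "endo_arr V \<Longrightarrow> endo_cell a \<Longrightarrow> endo_cell b \<Longrightarrow> cdom K a = ccod K b \<Longrightarrow>
    wl K V (vcomp K a b) = vcomp K (wl K V a) (wl K V b)"
  unfolding wl_def by (subst id2_vcomp_id2, assumption, subst interchange) auto

lemma wr_wr: "endo_arr V \<Longrightarrow> endo_arr W \<Longrightarrow> endo_cell a \<Longrightarrow> wr K (wr K a V) W = wr K a (comp1 K V W)"
  unfolding wr_def by (simp add: comp2_assoc[symmetric] comp2_id2)

lemma wl_wr: "endo_arr V \<Longrightarrow> endo_arr W \<Longrightarrow> endo_cell a \<Longrightarrow> wl K V (wr K a W) = wr K (wl K V a) W"
  unfolding wl_def wr_def by (simp add: comp2_assoc)

lemma wr_id2: "endo_arr V \<Longrightarrow> endo_arr f \<Longrightarrow> wr K (id2 K f) V = id2 K (comp1 K f V)"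
  unfolding wr_def by (simp add: comp2_id2)

lemma comp2_as_vcomp_whiskers:
  assumes "endo_cell a" "endo_cell b"
  shows "comp2 K a b = vcomp K (wr K a (ccod K b)) (wl K (cdom K a) b)"
    and "comp2 K a b = vcomp K (wl K (ccod K a) b) (wr K a (cdom K b))"
proof -
  have arrs: "endo_arr (cdom K a)" "endo_arr (ccod K a)" "endo_arr (cdom K b)" "endo_arr (ccod K b)"
    using assms unfolding endo_cell_def by auto
  have "comp2 K a b = comp2 K (vcomp K a (id2 K (cdom K a))) (vcomp K (id2 K (ccod K b)) b)"
    using assms by simp
  then show "comp2 K a b = vcomp K (wr K a (ccod K b)) (wl K (cdom K a) b)"
    unfolding wr_def wl_def using assms arrs by (subst (asm) interchange) auto
  have "comp2 K a b = comp2 K (vcomp K (id2 K (ccod K a)) a) (vcomp K b (id2 K (cdom K b)))"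
    using assms by simp
  then show "comp2 K a b = vcomp K (wl K (ccod K a) b) (wr K a (cdom K b))"
    unfolding wr_def wl_def using assms arrs by (subst (asm) interchange) auto
qed

lemma whisker_exchange:
  "endo_cell a \<Longrightarrow> endo_cell b \<Longrightarrow>
    vcomp K (wr K a (ccod K b)) (wl K (cdom K a) b) = vcomp K (wl K (ccod K a) b) (wr K a (cdom K b))"
  using comp2_as_vcomp_whiskers by metis

end

locale monad_comonad_2cell = endo_two_category K k
  for K :: "('o, 'a, 'b) two_cat_data" and k :: 'o +
  fixes t :: 'a and \<mu> \<eta> :: 'b and c :: 'a and \<delta> \<epsilon> \<psi> :: 'b
  assumes monad: "monad K k t \<mu> \<eta>"
    and comonad: "comonad K k c \<delta> \<epsilon>"
    and \<psi>_cell: "\<psi> \<in> Cell K" and cdom_\<psi>: "cdom K \<psi> = comp1 K t c" and ccod_\<psi>: "ccod K \<psi> = comp1 K c t"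
begin

abbreviation vcomp_infix (infixr "\<bullet>" 55) where "a \<bullet> b \<equiv> vcomp K a b"
abbreviation wl_infix (infixr "\<lhd>" 60) where "V \<lhd> a \<equiv> wl K V a"
abbreviation wr_infix (infixl "\<rhd>" 60) where "a \<rhd> V \<equiv> wr K a V"
abbreviation comp1_infix (infixr "\<cdot>" 65) where "f \<cdot> g \<equiv> comp1 K f g"

lemma endo_arr_t [simp]: "endo_arr t" and endo_arr_c [simp]: "endo_arr c"
  using monad comonad unfolding monad_def comonad_def endo_arr_def by auto

lemma cell_typing [simp]:
  "endo_cell \<mu>" "cdom K \<mu> = t \<cdot> t" "ccod K \<mu> = t"
  "endo_cell \<eta>" "cdom K \<eta> = id1 K k" "ccod K \<eta> = t"
  "endo_cell \<delta>" "cdom K \<delta> = c" "ccod K \<delta> = c \<cdot> c"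
  "endo_cell \<epsilon>" "cdom K \<epsilon> = c" "ccod K \<epsilon> = id1 K k"
  "endo_cell \<psi>" "cdom K \<psi> = t \<cdot> c" "ccod K \<psi> = c \<cdot> t"
  using monad comonad \<psi>_cell cdom_\<psi> ccod_\<psi> unfolding monad_def comonad_def endo_cell_def by auto

lemma right_unit_law: "\<mu> \<bullet> (t \<lhd> \<eta>) = id2 K t"
  using monad unfolding monad_def by simp

lemma right_counit_law: "(c \<lhd> \<epsilon>) \<bullet> \<delta> = id2 K c"
  using comonad unfolding comonad_def by simp

lemma iota_lifting_comultiplication_law:
  assumes mult: "\<psi> \<bullet> (\<mu> \<rhd> c) = (c \<lhd> \<mu>) \<bullet> ((\<psi> \<rhd> t) \<bullet> (t \<lhd> \<psi>))"
    and comult: "(\<delta> \<rhd> t) \<bullet> \<psi> = (c \<lhd> \<psi>) \<bullet> ((\<psi> \<rhd> c) \<bullet> (t \<lhd> \<delta>))"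
  shows "(\<delta> \<rhd> t) \<bullet> \<psi> = ((c \<cdot> c) \<lhd> \<mu>) \<bullet> ((c \<lhd> (\<psi> \<rhd> t)) \<bullet> ((\<psi> \<rhd> (c \<cdot> t)) \<bullet>
        ((t \<lhd> (\<delta> \<rhd> t)) \<bullet> ((t \<lhd> \<psi>) \<bullet> (t \<lhd> (\<eta> \<rhd> c))))))"
proof -
  let ?Y = "(t \<lhd> \<psi>) \<bullet> (t \<lhd> (\<eta> \<rhd> c))"
  have comult_t: "((c \<lhd> \<psi>) \<rhd> t) \<bullet> (((\<psi> \<rhd> c) \<rhd> t) \<bullet> ((t \<lhd> \<delta>) \<rhd> t)) = (\<delta> \<rhd> (t \<cdot> t)) \<bullet> (\<psi> \<rhd> t)"
  proof -
    have "((c \<lhd> \<psi>) \<rhd> t) \<bullet> (((\<psi> \<rhd> c) \<rhd> t) \<bullet> ((t \<lhd> \<delta>) \<rhd> t)) = ((c \<lhd> \<psi>) \<bullet> ((\<psi> \<rhd> c) \<bullet> (t \<lhd> \<delta>))) \<rhd> t"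
      by (simp add: wr_vcomp)
    also have "\<dots> = ((\<delta> \<rhd> t) \<bullet> \<psi>) \<rhd> t" by (simp only: comult)
    also have "\<dots> = (\<delta> \<rhd> (t \<cdot> t)) \<bullet> (\<psi> \<rhd> t)" by (simp add: wr_vcomp wr_wr)
    finally show ?thesis .
  qed
  have exchange: "((c \<cdot> c) \<lhd> \<mu>) \<bullet> (\<delta> \<rhd> (t \<cdot> t)) = (\<delta> \<rhd> t) \<bullet> (c \<lhd> \<mu>)"
    using whisker_exchange[of \<delta> \<mu>] by simp
  have unit_c: "(\<mu> \<rhd> c) \<bullet> (t \<lhd> (\<eta> \<rhd> c)) = id2 K (t \<cdot> c)"
    using right_unit_law by (simp add: wl_wr wr_id2 wr_vcomp[symmetric])
  have "((c \<cdot> c) \<lhd> \<mu>) \<bullet> ((c \<lhd> (\<psi> \<rhd> t)) \<bullet> ((\<psi> \<rhd> (c \<cdot> t)) \<bullet> ((t \<lhd> (\<delta> \<rhd> t)) \<bullet> ?Y)))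
     = ((c \<cdot> c) \<lhd> \<mu>) \<bullet> ((((c \<lhd> \<psi>) \<rhd> t) \<bullet> (((\<psi> \<rhd> c) \<rhd> t) \<bullet> ((t \<lhd> \<delta>) \<rhd> t))) \<bullet> ?Y)"
    by (simp add: wl_wr wr_wr vcomp_assoc)
  also have "\<dots> = (((c \<cdot> c) \<lhd> \<mu>) \<bullet> (\<delta> \<rhd> (t \<cdot> t))) \<bullet> ((\<psi> \<rhd> t) \<bullet> ?Y)"
    by (simp add: comult_t vcomp_assoc)
  also have "\<dots> = (\<delta> \<rhd> t) \<bullet> (((c \<lhd> \<mu>) \<bullet> ((\<psi> \<rhd> t) \<bullet> (t \<lhd> \<psi>))) \<bullet> (t \<lhd> (\<eta> \<rhd> c)))"
    by (simp add: exchange vcomp_assoc)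
  also have "\<dots> = (\<delta> \<rhd> t) \<bullet> (\<psi> \<bullet> ((\<mu> \<rhd> c) \<bullet> (t \<lhd> (\<eta> \<rhd> c))))"
    by (simp add: mult[symmetric] vcomp_assoc)
  also have "\<dots> = (\<delta> \<rhd> t) \<bullet> \<psi>"
    using vcomp_id2_right[of \<psi>] by (simp add: unit_c)
  finally show ?thesis by simp
qed

lemma pi_lifting_multiplication_law:
  assumes mult: "\<psi> \<bullet> (\<mu> \<rhd> c) = (c \<lhd> \<mu>) \<bullet> ((\<psi> \<rhd> t) \<bullet> (t \<lhd> \<psi>))"
    and comult: "(\<delta> \<rhd> t) \<bullet> \<psi> = (c \<lhd> \<psi>) \<bullet> ((\<psi> \<rhd> c) \<bullet> (t \<lhd> \<delta>))"
  shows "\<psi> \<bullet> (\<mu> \<rhd> c) = (c \<lhd> (\<epsilon> \<rhd> t)) \<bullet> ((c \<lhd> \<psi>) \<bullet> ((c \<lhd> (\<mu> \<rhd> c)) \<bullet>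
        ((\<psi> \<rhd> (t \<cdot> c)) \<bullet> ((t \<lhd> (\<psi> \<rhd> c)) \<bullet> ((t \<cdot> t) \<lhd> \<delta>)))))"
proof -
  let ?D = "(t \<cdot> t) \<lhd> \<delta>"
  let ?L = "c \<lhd> (\<epsilon> \<rhd> t)"
  have mult_c: "((c \<lhd> \<mu>) \<rhd> c) \<bullet> (((\<psi> \<rhd> t) \<rhd> c) \<bullet> ((t \<lhd> \<psi>) \<rhd> c)) = (\<psi> \<rhd> c) \<bullet> (\<mu> \<rhd> (c \<cdot> c))"
  proof -
    have "((c \<lhd> \<mu>) \<rhd> c) \<bullet> (((\<psi> \<rhd> t) \<rhd> c) \<bullet> ((t \<lhd> \<psi>) \<rhd> c)) = ((c \<lhd> \<mu>) \<bullet> ((\<psi> \<rhd> t) \<bullet> (t \<lhd> \<psi>))) \<rhd> c"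
      by (simp add: wr_vcomp)
    also have "\<dots> = (\<psi> \<bullet> (\<mu> \<rhd> c)) \<rhd> c" by (simp only: mult)
    also have "\<dots> = (\<psi> \<rhd> c) \<bullet> (\<mu> \<rhd> (c \<cdot> c))" by (simp add: wr_vcomp wr_wr)
    finally show ?thesis .
  qed
  have exchange: "(\<mu> \<rhd> (c \<cdot> c)) \<bullet> ?D = (t \<lhd> \<delta>) \<bullet> (\<mu> \<rhd> c)"
    using whisker_exchange[of \<mu> \<delta>] by simp
  have counit_t: "?L \<bullet> (\<delta> \<rhd> t) = id2 K (c \<cdot> t)"
    using right_counit_law by (simp add: wl_wr wr_id2 wr_vcomp[symmetric])
  have "?L \<bullet> ((c \<lhd> \<psi>) \<bullet> ((c \<lhd> (\<mu> \<rhd> c)) \<bullet> ((\<psi> \<rhd> (t \<cdot> c)) \<bullet> ((t \<lhd> (\<psi> \<rhd> c)) \<bullet> ?D))))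
     = ?L \<bullet> ((c \<lhd> \<psi>) \<bullet> ((((c \<lhd> \<mu>) \<rhd> c) \<bullet> (((\<psi> \<rhd> t) \<rhd> c) \<bullet> ((t \<lhd> \<psi>) \<rhd> c))) \<bullet> ?D))"
    by (simp add: wl_wr wr_wr vcomp_assoc)
  also have "\<dots> = ?L \<bullet> ((c \<lhd> \<psi>) \<bullet> ((\<psi> \<rhd> c) \<bullet> ((\<mu> \<rhd> (c \<cdot> c)) \<bullet> ?D)))"
    by (simp add: mult_c vcomp_assoc)
  also have "\<dots> = (?L \<bullet> ((c \<lhd> \<psi>) \<bullet> ((\<psi> \<rhd> c) \<bullet> (t \<lhd> \<delta>)))) \<bullet> (\<mu> \<rhd> c)"
    by (simp add: exchange vcomp_assoc)
  also have "\<dots> = ((?L \<bullet> (\<delta> \<rhd> t)) \<bullet> \<psi>) \<bullet> (\<mu> \<rhd> c)"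
    by (simp add: comult[symmetric] vcomp_assoc)
  also have "\<dots> = \<psi> \<bullet> (\<mu> \<rhd> c)"
    using vcomp_id2_left[of \<psi>] by (simp add: counit_t)
  finally show ?thesis by simp
qed

end

theorem proposition5p7:
  fixes K :: "('o, 'a, 'b) two_cat_data"
  assumes "two_category K"
    and "admits_EM_monads K"
    and "admits_EM_comonads K"
    and "idempotent_2cells_split K"
    and "monad K k t \<mu> \<eta>"
    and "comonad K k c \<delta> \<epsilon>"
    and "\<psi> \<in> Cell K" and "cdom K \<psi> = comp1 K t c" and "ccod K \<psi> = comp1 K c t"
  shows "weak_entwining K t \<mu> \<eta> c \<delta> \<epsilon> \<psi> \<longleftrightarrow>
           (weak_iota_lifting_comonad K t \<mu> \<eta> c \<delta> \<epsilon> \<psi> \<and> weak_pi_lifting_monad K t \<mu> \<eta> c \<delta> \<epsilon> \<psi>)"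
proof -
  have "k \<in> Ob K" using assms(5) unfolding monad_def by simp
  then interpret monad_comonad_2cell K k t \<mu> \<eta> c \<delta> \<epsilon> \<psi>
    using assms(1,5-9) by unfold_locales
  show ?thesis
  proof
    assume "weak_entwining K t \<mu> \<eta> c \<delta> \<epsilon> \<psi>"
    then show "weak_iota_lifting_comonad K t \<mu> \<eta> c \<delta> \<epsilon> \<psi> \<and> weak_pi_lifting_monad K t \<mu> \<eta> c \<delta> \<epsilon> \<psi>"
      using iota_lifting_comultiplication_law pi_lifting_multiplication_law
      unfolding weak_entwining_def weak_iota_lifting_comonad_def weak_pi_lifting_monad_def by simp
  next
    assume "weak_iota_lifting_comonad K t \<mu> \<eta> c \<delta> \<epsilon> \<psi> \<and> weak_pi_lifting_monad K t \<mu> \<eta> c \<delta> \<epsilon> \<psi>"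
    then show "weak_entwining K t \<mu> \<eta> c \<delta> \<epsilon> \<psi>"
      unfolding weak_entwining_def weak_iota_lifting_comonad_def weak_pi_lifting_monad_def by auto
  qed
qed

end
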